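(* Suppose the disturbance-action policy is implemented with time-varying parameters $\bm M_k\in\mathcal M$ for all $k$, with disturbances satisfying $\|w_k\|_\infty\le\bar w$, and suppose $\kappa^2(1-\gamma)^H<1$. Then for all $t\ge0$, $\|x_t\|_2\le b$, where $$b=\frac{\kappa\sqrt n\,\bar w\,(\kappa^2+2\kappa^5\kappa_B\sqrt{mn}\,H)}{(1-\kappa^2(1-\gamma)^H)\gamma}+\frac{2\sqrt{mn}\,\kappa^3\bar w}{\gamma}.$$ Moreover, if $H\ge\frac{\log(2\kappa^2)}{\log((1-\gamma)^{-1})}$, then $b\le8\sqrt{mn^2}\,H\bar w\kappa^6\kappa_B/\gamma$.
   Context: System $x_{t+1}=Ax_t+Bu_t+w_t$, $A\in\mathbb R^{n\times n}$, $B\in\mathbb R^{n\times m}$, $x_0=0$; $\bar w>0$. For matrices $\|\cdot\|_\infty$ is the max absolute row sum and $\|\cdot\|_2$ the spectral norm. For $\kappa\ge1$, $\gamma\in(0,1)$, $K$ is $(\kappa,\gamma)$-strongly stable if $A-BK=Q^{-1}LQ$ with $\|L\|_2\le1-\gamma$ and $\max(\|Q\|_2,\|Q^{-1}\|_2,\|K\|_2)\le\kappa$. $\kappa_B=\max(\|B\|_2,1)$. Fix a $(\kappa,\gamma)$-strongly stable $\mathbb K$. A parameter is a list $\bm M=(M^{[1]},\dots,M^{[H]})$, $M^{[i]}\in\mathbb R^{m\times n}$; implementing $\bm M_t$ means $u_t=-\mathbb Kx_t+\sum_{i=1}^HM_t^{[i]}w_{t-i}$ with $w_s=0$ for $s<0$.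 $\mathcal M=\{\bm M:\|M^{[i]}\|_\infty\le2\sqrt n\kappa^3(1-\gamma)^{i-1},\ 1\le i\le H\}$. *)

theory Defs
  imports "HOL-Analysis.Analysis"
begin

definition spec_norm :: "real^'n^'m \<Rightarrow> real" where
  "spec_norm M = onorm (\<lambda>x. M *v x)"

definition vec_inf_norm :: "real^'n \<Rightarrow> real" where
  "vec_inf_norm x = Max (range (\<lambda>i. \<bar>x $ i\<bar>))"

definition mat_inf_norm :: "real^'n^'m \<Rightarrow> real" where
  "mat_inf_norm M = Max (range (\<lambda>i. \<Sum>j\<in>UNIV. \<bar>M $ i $ j\<bar>))"

definition strongly_stable ::
  "real^'n^'n \<Rightarrow> real^'m^'n \<Rightarrow> real^'n^'m \<Rightarrow> real \<Rightarrow> real \<Rightarrow> bool" where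
  "strongly_stable A B K \<kappa> \<gamma> \<longleftrightarrow>
     (\<exists>Q L :: real^'n^'n. invertible Q \<and>
        A - B ** K = matrix_inv Q ** L ** Q \<and>
        spec_norm L \<le> 1 - \<gamma> \<and>
        spec_norm Q \<le> \<kappa> \<and> spec_norm (matrix_inv Q) \<le> \<kappa> \<and> spec_norm K \<le> \<kappa>)"

definition in_M_set :: "nat \<Rightarrow> real \<Rightarrow> real \<Rightarrow> (nat \<Rightarrow> real^'n^'m) \<Rightarrow> bool" where
  "in_M_set H \<kappa> \<gamma> M \<longleftrightarrow>
     (\<forall>i\<in>{1..H}. mat_inf_norm (M i) \<le> 2 * sqrt (real CARD('n)) * \<kappa>^3 * (1 - \<gamma>)^(i - 1))"

end

theory Submission
  imports Defs
begin

text \<open>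
  With \<open>v\<^sub>t\<close> the disturbance-action term, the closed loop reads
  \<open>x\<^sub>t\<^sub>+\<^sub>1 = (A - B K) x\<^sub>t + (B v\<^sub>t + w\<^sub>t)\<close>.
  The row-sum bounds defining \<open>\<M>\<close> decay geometrically in \<open>i\<close>, so
  \<open>\<parallel>v\<^sub>t\<parallel>\<^sub>\<infinity> \<le> 2\<surd>n \<kappa>\<^sup>3 wbar/\<gamma>\<close> and the forcing term has Euclidean norm at most
  \<open>c = \<surd>n wbar + \<kappa>\<^sub>B \<surd>(mn) 2\<kappa>\<^sup>3 wbar/\<gamma>\<close>. In the coordinates \<open>Q x\<close> the
  closed loop is a \<open>(1 - \<gamma>)\<close>-contraction, whence \<open>\<parallel>x\<^sub>t\<parallel> \<le> \<kappa>\<^sup>2 c/\<gamma>\<close>; this is at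
  most \<open>b\<close> because Bernoulli's inequality gives \<open>1 - \<kappa>\<^sup>2(1 - \<gamma>)\<^sup>H \<le> H\<gamma>\<close>.
  The condition on \<open>H\<close> means \<open>\<kappa>\<^sup>2(1 - \<gamma>)\<^sup>H \<le> 1/2\<close>, which gives the simplified bound.
\<close>

lemma
  fixes Q :: "'a::semiring_1^'n^'n"
  assumes "invertible Q"
  shows matrix_inv_right: "Q ** matrix_inv Q = mat 1"
    and matrix_inv_left: "matrix_inv Q ** Q = mat 1"
  using someI_ex[OF assms[unfolded invertible_def]] unfolding matrix_inv_def by auto

lemma norm_matrix_vector_mult_le_spec_norm: "norm (M *v y) \<le> spec_norm M * norm y"
  unfolding spec_norm_def by (rule onorm) simp

lemma spec_norm_nonneg: "0 \<le> spec_norm M"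
  unfolding spec_norm_def by (rule onorm_pos_le) simp

lemma vec_inf_norm_eq_infnorm: "vec_inf_norm x = infnorm x"
  unfolding vec_inf_norm_def infnorm_cart
  by (simp add: cSup_eq_Max full_SetCompr_eq)

lemma infnorm_sum_le: "infnorm (\<Sum>i\<in>S. f i) \<le> (\<Sum>i\<in>S. infnorm (f i))"
proof (induction S rule: infinite_finite_induct)
  case (insert i S)
  then show ?case using infnorm_triangle[of "f i" "sum f S"] by simp
qed (simp_all add: infnorm_0)

lemma infnorm_matrix_vector_mult_le:
  fixes M :: "real^'n^'m"
  shows "infnorm (M *v y) \<le> mat_inf_norm M * infnorm y"
proof -
  have "\<bar>(M *v y) $ i\<bar> \<le> mat_inf_norm M * infnorm y" for i
  proof -
    have "\<bar>(M *v y) $ i\<bar> \<le> (\<Sum>j\<in>UNIV. \<bar>M $ i $ j\<bar> * \<bar>y $ j\<bar>)"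
      unfolding matrix_vector_mult_def by (simp add: sum_abs[THEN order_trans] abs_mult)
    also have "\<dots> \<le> (\<Sum>j\<in>UNIV. \<bar>M $ i $ j\<bar>) * infnorm y"
      unfolding sum_distrib_right by (intro sum_mono mult_left_mono component_le_infnorm_cart) simp
    also have "\<dots> \<le> mat_inf_norm M * infnorm y"
      unfolding mat_inf_norm_def by (intro mult_right_mono Max_ge infnorm_pos_le) auto
    finally show ?thesis .
  qed
  then show ?thesis
    unfolding infnorm_cart by (intro cSup_least) auto
qed

lemma sum_power_le_inverse:
  fixes r :: real
  assumes "0 \<le> r" "r < 1"
  shows "(\<Sum>i<H. r ^ i) \<le> 1 / (1 - r)"
  using assms by (simp add: sum_gp_strict divide_right_mono)

lemma one_minus_mult_power_le:
  fixes a \<gamma> :: real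
  assumes "1 \<le> a" "0 \<le> \<gamma>" "\<gamma> \<le> 1"
  shows "1 - a * (1 - \<gamma>) ^ H \<le> real H * \<gamma>"
proof -
  have "1 - real H * \<gamma> \<le> (1 - \<gamma>) ^ H"
    using Bernoulli_inequality[of "- \<gamma>" H] assms by simp
  also have "\<dots> \<le> a * (1 - \<gamma>) ^ H"
    using assms by (simp add: mult_le_cancel_right1)
  finally show ?thesis by simp
qed

lemma mult_power_le_one_if_ln_div_le:
  fixes a r :: real
  assumes "0 < a" "0 < r" "r < 1" "ln a / ln (1 / r) \<le> real H"
  shows "a * r ^ H \<le> 1"
proof -
  have "ln a \<le> ln ((1 / r) ^ H)"
    using assms by (simp add: pos_divide_le_eq ln_realpow mult.commute)
  then have "a \<le> (1 / r) ^ H" using assms by simp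
  then show ?thesis using assms by (simp add: power_one_over field_simps)
qed

lemma norm_contraction_recursion_le:
  fixes L :: "real^'n^'n"
  assumes L: "spec_norm L \<le> 1 - \<gamma>" and \<gamma>: "0 < \<gamma>"
    and z0: "z 0 = 0" and z_Suc: "\<And>t. z (Suc t) = L *v z t + d t"
    and d: "\<And>t. norm (d t) \<le> c"
  shows "norm (z t) \<le> c / \<gamma>"
proof (induction t)
  case 0
  have "0 \<le> c" using d[of 0] norm_ge_zero order_trans by blast
  then show ?case using z0 \<gamma> by simp
next
  case (Suc t)
  have "norm (z (Suc t)) \<le> spec_norm L * norm (z t) + c"
    using z_Suc[of t] norm_triangle_ineq[of "L *v z t" "d t"]
      norm_matrix_vector_mult_le_spec_norm[of L "z t"] d[of t] by simp
  also have "\<dots> \<le> (1 - \<gamma>) * (c / \<gamma>) + c"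
    using L Suc.IH spec_norm_nonneg[of L] by (intro add_right_mono mult_mono) auto
  also have "\<dots> = c / \<gamma>" using \<gamma> by (simp add: field_simps)
  finally show ?case .
qed

lemma strongly_stable_closed_loop_norm_le:
  fixes A :: "real^'n^'n" and B :: "real^'m^'n" and K :: "real^'n^'m"
  assumes "strongly_stable A B K \<kappa> \<gamma>" "0 < \<gamma>"
    and x0: "x 0 = 0" and x_Suc: "\<And>t. x (Suc t) = (A - B ** K) *v x t + e t"
    and e: "\<And>t. norm (e t) \<le> c"
  shows "norm (x t) \<le> \<kappa>^2 * c / \<gamma>"
proof -
  obtain Q L :: "real^'n^'n" where Q: "invertible Q"
    and similar: "A - B ** K = matrix_inv Q ** L ** Q" and L: "spec_norm L \<le> 1 - \<gamma>"
    and Q_le: "spec_norm Q \<le> \<kappa>" and Q_inv_le: "spec_norm (matrix_inv Q) \<le> \<kappa>"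
    using assms(1) unfolding strongly_stable_def by blast
  have \<kappa>: "0 \<le> \<kappa>" using Q_le spec_norm_nonneg[of Q] by linarith
  have "Q ** (A - B ** K) = L ** Q"
    unfolding similar by (simp add: matrix_mul_assoc matrix_inv_right[OF Q])
  then have "Q *v x (Suc t) = L *v (Q *v x t) + Q *v e t" for t
    by (simp add: x_Suc matrix_vector_right_distrib matrix_vector_mul_assoc)
  moreover have "norm (Q *v e t) \<le> \<kappa> * c" for t
    using norm_matrix_vector_mult_le_spec_norm[of Q "e t"] Q_le e[of t] \<kappa>
    by (meson mult_mono norm_ge_zero order_trans spec_norm_nonneg)
  ultimately have Qx: "norm (Q *v x t) \<le> \<kappa> * c / \<gamma>"
    using norm_contraction_recursion_le[OF L \<open>0 < \<gamma>\<close>, of "\<lambda>t. Q *v x t"] x0 by simp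
  have "norm (x t) = norm (matrix_inv Q *v (Q *v x t))"
    by (simp add: matrix_vector_mul_assoc matrix_inv_left[OF Q])
  also have "\<dots> \<le> \<kappa> * (\<kappa> * c / \<gamma>)"
    using norm_matrix_vector_mult_le_spec_norm[of "matrix_inv Q" "Q *v x t"] Q_inv_le Qx \<kappa>
    by (meson mult_mono norm_ge_zero order_trans spec_norm_nonneg)
  finally show ?thesis by (simp add: power2_eq_square)
qed

lemma infnorm_disturbance_action_le:
  fixes M :: "nat \<Rightarrow> real^'n^'m" and w :: "nat \<Rightarrow> real^'n"
  assumes M: "in_M_set H \<kappa> \<gamma> M" and "0 \<le> \<kappa>" "0 < \<gamma>" "\<gamma> \<le> 1"
    and w: "\<And>k. infnorm (w k) \<le> wbar"
  shows "infnorm (\<Sum>i\<in>{1..H}. if i \<le> t then M i *v w (t - i) else 0)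
           \<le> 2 * sqrt (real CARD('n)) * \<kappa>^3 * wbar / \<gamma>"
proof -
  define a where "a = 2 * sqrt (real CARD('n)) * \<kappa>^3 * wbar"
  have "0 \<le> wbar" using w[of 0] infnorm_pos_le[of "w 0"] by linarith
  then have a: "0 \<le> a" unfolding a_def using \<open>0 \<le> \<kappa>\<close> by simp
  have term_le: "infnorm (if i \<le> t then M i *v w (t - i) else 0) \<le> a * (1 - \<gamma>) ^ (i - 1)"
    if "i \<in> {1..H}" for i
  proof -
    have "infnorm (M i *v w (t - i)) \<le> mat_inf_norm (M i) * infnorm (w (t - i))"
      by (rule infnorm_matrix_vector_mult_le)
    also have "\<dots> \<le> 2 * sqrt (real CARD('n)) * \<kappa>^3 * (1 - \<gamma>) ^ (i - 1) * wbar"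
      using M that w[of "t - i"] assms(2,4) unfolding in_M_set_def
      by (intro mult_mono) (auto intro: infnorm_pos_le)
    moreover have "0 \<le> a * (1 - \<gamma>) ^ (i - 1)" using a \<open>\<gamma> \<le> 1\<close> by simp
    ultimately show ?thesis by (simp add: a_def infnorm_0 mult_ac)
  qed
  have "infnorm (\<Sum>i\<in>{1..H}. if i \<le> t then M i *v w (t - i) else 0)
        \<le> (\<Sum>i\<in>{1..H}. a * (1 - \<gamma>) ^ (i - 1))"
    using infnorm_sum_le sum_mono[OF term_le] by (rule order_trans)
  also have "\<dots> = a * (\<Sum>i<H. (1 - \<gamma>) ^ i)"
    by (simp add: sum.atLeast1_atMost_eq sum_distrib_left)
  also have "\<dots> \<le> a / \<gamma>"
    using sum_power_le_inverse[of "1 - \<gamma>" H] assms a by (simp add: mult_left_mono divide_inverse)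
  finally show ?thesis unfolding a_def .
qed

definition state_bound :: "real \<Rightarrow> real \<Rightarrow> real \<Rightarrow> real \<Rightarrow> real \<Rightarrow> real \<Rightarrow> nat \<Rightarrow> real" where
  "state_bound n m \<kappa>B \<kappa> \<gamma> wbar H =
     \<kappa> * sqrt n * wbar * (\<kappa>^2 + 2 * \<kappa>^5 * \<kappa>B * sqrt (m * n) * real H)
       / ((1 - \<kappa>^2 * (1 - \<gamma>)^H) * \<gamma>)
     + 2 * sqrt (m * n) * \<kappa>^3 * wbar / \<gamma>"

lemma closed_loop_bound_le_state_bound:
  fixes \<kappa> \<gamma> n m \<kappa>B wbar :: real
  assumes \<kappa>: "1 \<le> \<kappa>" and \<gamma>: "0 < \<gamma>" "\<gamma> < 1" and H: "\<kappa>^2 * (1 - \<gamma>)^H < 1"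
    and "1 \<le> n" "0 \<le> m" "0 \<le> \<kappa>B" "0 \<le> wbar"
  shows "\<kappa>^2 * (sqrt n * wbar + \<kappa>B * (2 * sqrt (m * n) * \<kappa>^3 * wbar / \<gamma>)) / \<gamma>
           \<le> state_bound n m \<kappa>B \<kappa> \<gamma> wbar H"
proof -
  define D where "D = 1 - \<kappa>^2 * (1 - \<gamma>)^H"
  define p where "p = sqrt n"
  define q where "q = sqrt (m * n)"
  have D: "0 < D" "D \<le> 1" "D \<le> real H * \<gamma>"
    using H \<gamma> one_minus_mult_power_le[of "\<kappa>^2" \<gamma> H] \<kappa> unfolding D_def
    by (auto simp: one_le_power)
  have p: "1 \<le> p" and q: "0 \<le> q" using assms unfolding p_def q_def by auto
  have w_term: "\<kappa>^2 * p * wbar / \<gamma> \<le> \<kappa> * p * wbar * \<kappa>^2 / (D * \<gamma>)"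
  proof -
    have "\<kappa>^2 * (p * wbar) * D \<le> \<kappa>^2 * (p * wbar) * \<kappa>"
      using D \<kappa> p assms by (intro mult_left_mono) auto
    then have "\<kappa>^2 * (p * wbar) \<le> \<kappa> * \<kappa>^2 * (p * wbar) / D"
      using D by (simp add: le_divide_eq mult_ac)
    from divide_right_mono[OF this, of \<gamma>] \<gamma> show ?thesis by (simp add: mult_ac)
  qed
  have "1 \<le> \<kappa> * p" using \<kappa> p mult_mono[of 1 \<kappa> 1 p] by simp
  then have "real H * \<gamma> \<le> \<kappa> * p * (real H * \<gamma>)"
    using \<gamma> mult_right_mono[of 1 "\<kappa> * p" "real H * \<gamma>"] by simp
  then have "D \<le> \<kappa> * p * real H * \<gamma>" using D by (simp add: mult_ac)
  then have "1 / \<gamma> \<le> \<kappa> * p * real H / D" using D \<gamma> by (simp add: field_simps)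
  then have Bv_term: "2 * \<kappa>^5 * \<kappa>B * q * wbar / \<gamma> * (1 / \<gamma>)
      \<le> 2 * \<kappa>^5 * \<kappa>B * q * wbar / \<gamma> * (\<kappa> * p * real H / D)"
    using \<kappa> q assms \<gamma> by (intro mult_left_mono) auto
  have "\<kappa>^2 * (p * wbar + \<kappa>B * (2 * q * \<kappa>^3 * wbar / \<gamma>)) / \<gamma>
      = \<kappa>^2 * p * wbar / \<gamma> + 2 * \<kappa>^5 * \<kappa>B * q * wbar / \<gamma> * (1 / \<gamma>)"
    using \<gamma> by (simp add: field_simps power_numeral_reduce)
  also have "\<dots> \<le> \<kappa> * p * wbar * (\<kappa>^2 + 2 * \<kappa>^5 * \<kappa>B * q * real H) / (D * \<gamma>)"
    using add_mono[OF w_term Bv_term] by (simp add: add_divide_distrib distrib_left mult_ac)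
  also have "\<dots> \<le> state_bound n m \<kappa>B \<kappa> \<gamma> wbar H"
    using q \<gamma> assms unfolding state_bound_def D_def p_def q_def by simp
  finally show ?thesis unfolding p_def q_def .
qed

lemma state_bound_le:
  fixes \<kappa> \<gamma> n m \<kappa>B wbar :: real
  assumes \<kappa>: "1 \<le> \<kappa>" and \<gamma>: "0 < \<gamma>" "\<gamma> < 1" and H: "2 * \<kappa>^2 * (1 - \<gamma>)^H \<le> 1"
    and "1 \<le> n" "1 \<le> m" "1 \<le> \<kappa>B" "0 \<le> wbar"
  shows "state_bound n m \<kappa>B \<kappa> \<gamma> wbar H \<le> 8 * sqrt (m * n^2) * real H * wbar * \<kappa>^6 * \<kappa>B / \<gamma>"
proof -
  define D where "D = 1 - \<kappa>^2 * (1 - \<gamma>)^H"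
  define p where "p = sqrt n"
  define q where "q = sqrt (m * n)"
  define F where "F = \<kappa> * p * wbar * (\<kappa>^2 + 2 * \<kappa>^5 * \<kappa>B * q * real H)"
  have "1 \<le> \<kappa>^2" using \<kappa> by (simp add: one_le_power)
  then have "H \<noteq> 0" using H by (cases H) auto
  then have H1: "1 \<le> real H" by simp
  have "1 / D \<le> 2" and "0 < D" using H unfolding D_def by (simp_all add: field_simps)
  have p: "1 \<le> p" and q: "1 \<le> q"
    using assms mult_mono[of 1 m 1 n] unfolding p_def q_def by auto
  have F: "0 \<le> F" unfolding F_def using assms p q by simp
  have "state_bound n m \<kappa>B \<kappa> \<gamma> wbar H = (F * (1 / D) + 2 * q * \<kappa>^3 * wbar) / \<gamma>"
    unfolding state_bound_def F_def D_def p_def q_def using \<gamma> \<open>0 < D\<close>[unfolded D_def]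
    by (simp add: field_simps)
  also have "\<dots> \<le> (F * 2 + 2 * q * \<kappa>^3 * wbar) / \<gamma>"
    using \<open>1 / D \<le> 2\<close> F \<gamma> by (intro divide_right_mono add_right_mono mult_left_mono) auto
  also have "\<dots> \<le> 8 * (q * p) * real H * wbar * \<kappa>^6 * \<kappa>B / \<gamma>"
  proof (intro divide_right_mono)
    have "\<kappa>^3 \<le> \<kappa>^6" using \<kappa> by (intro power_increasing) auto
    moreover have "1 \<le> \<kappa>B * q * real H" "1 \<le> \<kappa>B * p * real H"
      using assms p q H1 mult_mono[of 1 \<kappa>B 1 q] mult_mono[of 1 "\<kappa>B * q" 1 "real H"]
        mult_mono[of 1 \<kappa>B 1 p] mult_mono[of 1 "\<kappa>B * p" 1 "real H"] by simp_all
    ultimately have "\<kappa>^3 \<le> \<kappa>^6 * (\<kappa>B * q * real H)" "\<kappa>^3 \<le> \<kappa>^6 * (\<kappa>B * p * real H)"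
      using \<kappa> by (simp_all add: mult_mono[of "\<kappa>^3" "\<kappa>^6" 1, simplified])
    then have "p * wbar * \<kappa>^3 \<le> p * wbar * (\<kappa>^6 * (\<kappa>B * q * real H))"
        "q * wbar * \<kappa>^3 \<le> q * wbar * (\<kappa>^6 * (\<kappa>B * p * real H))"
      using p q assms by (simp_all add: mult_left_mono)
    then show "F * 2 + 2 * q * \<kappa>^3 * wbar \<le> 8 * (q * p) * real H * wbar * \<kappa>^6 * \<kappa>B"
      unfolding F_def by (simp add: algebra_simps power_numeral_reduce)
  qed (use \<gamma> in simp)
  also have "q * p = sqrt (m * n^2)"
    unfolding p_def q_def by (simp add: real_sqrt_mult power2_eq_square)
  finally show ?thesis .
qed

lemma disturbance_action_state_norm_le:
  fixes A :: "real^'n^'n" and B :: "real^'m^'n" and K :: "real^'n^'m"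
    and x :: "nat \<Rightarrow> real^'n" and u :: "nat \<Rightarrow> real^'m" and w :: "nat \<Rightarrow> real^'n"
    and M :: "nat \<Rightarrow> nat \<Rightarrow> real^'n^'m"
  assumes stable: "strongly_stable A B K \<kappa> \<gamma>" and \<gamma>: "0 < \<gamma>"
    and x0: "x 0 = 0"
    and dyn: "\<And>t. x (Suc t) = A *v x t + B *v u t + w t"
    and ctrl: "\<And>t. u t = - (K *v x t) + (\<Sum>i\<in>{1..H}. if i \<le> t then M t i *v w (t - i) else 0)"
    and M: "\<And>k. in_M_set H \<kappa> \<gamma> (M k)"
    and w: "\<And>k. vec_inf_norm (w k) \<le> wbar"
    and \<kappa>B: "spec_norm B \<le> \<kappa>B"
  shows "norm (x t) \<le> \<kappa>^2 * (sqrt (real CARD('n)) * wbar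
           + \<kappa>B * (2 * sqrt (real CARD('m) * real CARD('n)) * \<kappa>^3 * wbar / \<gamma>)) / \<gamma>"
proof -
  define n where "n = real CARD('n)"
  define m where "m = real CARD('m)"
  define v where "v t = (\<Sum>i\<in>{1..H}. if i \<le> t then M t i *v w (t - i) else 0)" for t
  have "0 \<le> \<kappa>" "\<gamma> \<le> 1"
    using stable spec_norm_nonneg unfolding strongly_stable_def by (meson order_trans diff_ge_0_iff_ge)+
  have w_inf: "infnorm (w k) \<le> wbar" for k using w by (simp add: vec_inf_norm_eq_infnorm)
  have v_le: "norm (v t) \<le> sqrt m * (2 * sqrt n * \<kappa>^3 * wbar / \<gamma>)" for t
  proof -
    have "norm (v t) \<le> sqrt m * infnorm (v t)"
      using norm_le_infnorm[of "v t"] unfolding m_def by simp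
    also have "\<dots> \<le> sqrt m * (2 * sqrt n * \<kappa>^3 * wbar / \<gamma>)"
      unfolding v_def n_def using \<open>0 \<le> \<kappa>\<close> \<gamma> \<open>\<gamma> \<le> 1\<close>
      by (intro mult_left_mono infnorm_disturbance_action_le[OF M _ _ _ w_inf]) (simp_all add: m_def)
    finally show ?thesis .
  qed
  have e_le: "norm (B *v v t + w t) \<le> sqrt n * wbar + \<kappa>B * (2 * sqrt (m * n) * \<kappa>^3 * wbar / \<gamma>)" for t
  proof -
    have "norm (B *v v t) \<le> spec_norm B * norm (v t)"
      by (rule norm_matrix_vector_mult_le_spec_norm)
    also have "\<dots> \<le> \<kappa>B * (sqrt m * (2 * sqrt n * \<kappa>^3 * wbar / \<gamma>))"
      using \<kappa>B v_le[of t] spec_norm_nonneg[of B] by (intro mult_mono) auto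
    also have "\<dots> = \<kappa>B * (2 * sqrt (m * n) * \<kappa>^3 * wbar / \<gamma>)"
      by (simp add: real_sqrt_mult)
    finally have "norm (B *v v t) \<le> \<kappa>B * (2 * sqrt (m * n) * \<kappa>^3 * wbar / \<gamma>)" .
    moreover have "norm (w t) \<le> sqrt n * wbar"
      using norm_le_infnorm[of "w t"] w_inf[of t] unfolding n_def
      by (auto intro: order_trans mult_left_mono)
    ultimately show ?thesis using norm_triangle_ineq[of "B *v v t" "w t"] by linarith
  qed
  have closed_loop: "x (Suc t) = (A - B ** K) *v x t + (B *v v t + w t)" for t
    using dyn[of t] ctrl[of t] unfolding v_def
    by (simp add: matrix_vector_mult_diff_rdistrib matrix_vector_right_distrib
        matrix_vector_mul_assoc[symmetric] algebra_simps)
  show ?thesis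
    using strongly_stable_closed_loop_norm_le[OF stable \<gamma> x0 closed_loop e_le]
    unfolding n_def m_def .
qed

theorem lemma2:
  fixes A :: "real^'n^'n" and B :: "real^'m^'n" and KK :: "real^'n^'m"
    and x :: "nat \<Rightarrow> real^'n" and u :: "nat \<Rightarrow> real^'m" and w :: "nat \<Rightarrow> real^'n"
    and M :: "nat \<Rightarrow> nat \<Rightarrow> real^'n^'m"
    and \<kappa> \<gamma> wbar :: real and H :: nat
  assumes kappa: "\<kappa> \<ge> 1"
    and gamma: "0 < \<gamma>" "\<gamma> < 1"
    and wbar: "wbar > 0"
    and stable: "strongly_stable A B KK \<kappa> \<gamma>"
    and x0: "x 0 = 0"
    and dyn: "\<And>t. x (Suc t) = A *v x t + B *v u t + w t"
    and ctrl: "\<And>t. u t = - (KK *v x t) + (\<Sum>i\<in>{1..H}. if i \<le> t then M t i *v w (t - i) else 0)"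
    and Min: "\<And>k. in_M_set H \<kappa> \<gamma> (M k)"
    and wbd: "\<And>k. vec_inf_norm (w k) \<le> wbar"
    and Hcond: "\<kappa>^2 * (1 - \<gamma>)^H < 1"
  shows "let n = real CARD('n); m = real CARD('m); \<kappa>B = max (spec_norm B) 1;
             b = \<kappa> * sqrt n * wbar * (\<kappa>^2 + 2 * \<kappa>^5 * \<kappa>B * sqrt (m * n) * real H)
                   / ((1 - \<kappa>^2 * (1 - \<gamma>)^H) * \<gamma>)
                 + 2 * sqrt (m * n) * \<kappa>^3 * wbar / \<gamma>
         in (\<forall>t. norm (x t) \<le> b) \<and>
            (real H \<ge> ln (2 * \<kappa>^2) / ln (1 / (1 - \<gamma>)) \<longrightarrow>
               b \<le> 8 * sqrt (m * n^2) * real H * wbar * \<kappa>^6 * \<kappa>B / \<gamma>)"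
proof -
  define n where "n = real CARD('n)"
  define m where "m = real CARD('m)"
  define \<kappa>B where "\<kappa>B = max (spec_norm B) 1"
  have n: "1 \<le> n" and m: "1 \<le> m" unfolding n_def m_def by (simp_all add: Suc_leI)
  have \<kappa>B: "spec_norm B \<le> \<kappa>B" "1 \<le> \<kappa>B" unfolding \<kappa>B_def by simp_all
  have "norm (x t) \<le> state_bound n m \<kappa>B \<kappa> \<gamma> wbar H" for t
    using disturbance_action_state_norm_le[OF stable gamma(1) x0 dyn ctrl Min wbd \<kappa>B(1), of t]
      closed_loop_bound_le_state_bound[OF kappa gamma Hcond n, of m \<kappa>B wbar] m \<kappa>B wbar
    unfolding n_def m_def by (simp add: mult.commute)
  moreover have "state_bound n m \<kappa>B \<kappa> \<gamma> wbar H
      \<le> 8 * sqrt (m * n^2) * real H * wbar * \<kappa>^6 * \<kappa>B / \<gamma>"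
    if "real H \<ge> ln (2 * \<kappa>^2) / ln (1 / (1 - \<gamma>))"
    using state_bound_le[OF kappa gamma _ n m \<kappa>B(2)] wbar
      mult_power_le_one_if_ln_div_le[of "2 * \<kappa>^2" "1 - \<gamma>" H] that kappa gamma
    by simp
  ultimately show ?thesis
    unfolding Let_def state_bound_def n_def m_def \<kappa>B_def by simp
qed

end
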